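(* Fix $M>0$. If $c,d\in\ell_{\infty,M}(X^\ast,\mathbb{K}^\ell)$, then for every $\epsilon>0$, with $M_\epsilon=M(1+\epsilon)$, one has $c\sqcup\!\sqcup\, d\in \ell_{\infty,M_\epsilon}(X^\ast,\mathbb{K}^\ell)$ and $$\|c\sqcup\!\sqcup\, d\|_{\ell_\infty,M_\epsilon}\leq K_\epsilon\,\|c\|_{\ell_\infty,M}\,\|d\|_{\ell_\infty,M},$$ where $K_\epsilon=\sup_{\eta\in X^\ast}(|\eta|+1)/(1+\epsilon)^{|\eta|}$, and moreover $K_\epsilon\leq \hat K_\epsilon:=e^{-1}(1+\epsilon)/\log(1+\epsilon)$.
   Context: $\mathbb{K}\in\{\mathbb{R},\mathbb{C}\}$. $X=\{x_0,x_1,\ldots,x_m\}$ is a finite alphabet of noncommuting letters, $X^\ast$ the set of words (finite sequences of letters, including the empty word $\emptyset$), $|\eta|$ the length of a word. A formal power series is a map $c\colon X^\ast\to\mathbb{K}^\ell$, written $c=\sum_\eta (c,\eta)\eta$; the set of these is $\mathbb{K}^\ell\langle\langle X\rangle\rangle$. The shuffle product $\sqcup\!\sqcup$ is the bilinear product determined on words by $(x_i\eta)\sqcup\!\sqcup(x_j\xi)=x_i(\eta\sqcup\!\sqcup(x_j\xi))+x_j((x_i\eta)\sqcup\!\sqcup\xi)$, $\eta\sqcup\!\sqcup\emptyset=\emptyset\sqcup\!\sqcup\eta=\eta$, extended to series by $(c\sqcup\!\sqcup d,\eta)=\sum_{\nu,\xi}(c,\nu)(d,\xi)(\nu\sqcup\!\sqcup\xi,\eta)$,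 and componentwise for $\mathbb{K}^\ell$-valued series. For $M>0$ and $c\in\mathbb{K}^\ell\langle\langle X\rangle\rangle$ put $\|c\|_{\ell_\infty,M}=\sup_{\eta\in X^\ast}|(c,\eta)|/(M^{|\eta|}|\eta|!)\in[0,\infty]$, where $|z|=\max_i|z_i|$ for $z\in\mathbb{K}^\ell$; $\ell_{\infty,M}(X^\ast,\mathbb{K}^\ell)$ is the Banach space of all $c$ with $\|c\|_{\ell_\infty,M}<\infty$. *)

theory Defs
  imports "HOL-Analysis.Analysis"
begin

text \<open>Words over the finite alphabet 'a are lists. A K^l-valued formal power series
is a map from words to 'l \<Rightarrow> 'k, with 'l a finite index type (components).\<close>

text \<open>Shuffle coefficient (nu shuffle xi, eta): number of interleavings of nu and xi giving eta,
defined by the recursion (x_i nu) sh (x_j xi) = x_i (nu sh x_j xi) + x_j (x_i nu sh xi).\<close>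
fun shuffle_coeff :: "'a list \<Rightarrow> 'a list \<Rightarrow> 'a list \<Rightarrow> nat" where
  "shuffle_coeff [] xi eta = (if xi = eta then 1 else 0)"
| "shuffle_coeff (a # nu) [] eta = (if a # nu = eta then 1 else 0)"
| "shuffle_coeff (a # nu) (b # xi) [] = 0"
| "shuffle_coeff (a # nu) (b # xi) (e # eta) =
     (if a = e then shuffle_coeff nu (b # xi) eta else 0)
   + (if b = e then shuffle_coeff (a # nu) xi eta else 0)"

definition shuffle_series ::
  "('a::finite list \<Rightarrow> 'l \<Rightarrow> 'k::real_normed_field) \<Rightarrow> ('a list \<Rightarrow> 'l \<Rightarrow> 'k) \<Rightarrow> 'a list \<Rightarrow> 'l \<Rightarrow> 'k" where
  "shuffle_series c d eta i =
     (\<Sum>(nu, xi) \<in> {(nu, xi). length nu + length xi = length eta}.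
        c nu i * d xi i * of_nat (shuffle_coeff nu xi eta))"

definition maxnorm :: "('l::finite \<Rightarrow> 'k::real_normed_field) \<Rightarrow> real" where
  "maxnorm z = Max (range (\<lambda>i. norm (z i)))"

definition linf_norm :: "real \<Rightarrow> ('a list \<Rightarrow> 'l::finite \<Rightarrow> 'k::real_normed_field) \<Rightarrow> ennreal" where
  "linf_norm M c = (SUP eta. ennreal (maxnorm (c eta) / (M ^ length eta * fact (length eta))))"

definition K_eps :: "'a itself \<Rightarrow> real \<Rightarrow> real" where
  "K_eps _ eps = (SUP eta :: 'a list. (real (length eta) + 1) / (1 + eps) ^ length eta)"

end

theory Submission imports Defs begin

text \<open>Termwise, \<open>|(c,\<nu>)| \<le> \<parallel>c\<parallel> M^|\<nu>| |\<nu>|!\<close>. Summed over all words \<open>\<nu>, \<xi>\<close> of lengths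
  \<open>k\<close> and \<open>n - k\<close>, the shuffle coefficients \<open>(\<nu> \<sqcup>\<sqcup> \<xi>, \<eta>)\<close> of a word \<open>\<eta>\<close> of length \<open>n\<close> add up
  to \<open>n choose k\<close>, so \<open>|(c \<sqcup>\<sqcup> d, \<eta>)| \<le> \<parallel>c\<parallel> \<parallel>d\<parallel> M^n \<Sum>\<^sub>k k! (n-k)! (n choose k) = \<parallel>c\<parallel> \<parallel>d\<parallel> M^n (n+1) n!\<close>.
  Dividing by \<open>(M(1+\<epsilon>))^n n!\<close> leaves \<open>(n+1)/(1+\<epsilon>)^n \<le> K\<^sub>\<epsilon>\<close>. With \<open>t = (n+1) log(1+\<epsilon>)\<close> this
  ratio is \<open>(1+\<epsilon>) t e^-t / log(1+\<epsilon>)\<close>, and \<open>t e^-t \<le> e^-1\<close>.\<close>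

lemma finite_words_of_length: "finite {xs :: 'a::finite list. length xs = k}"
  using finite_lists_length_eq[of "UNIV :: 'a set" k] by simp

lemma shuffle_coeff_nonzero_length:
  "shuffle_coeff nu xi eta \<noteq> 0 \<Longrightarrow> length nu + length xi = length eta"
  by (induction nu xi eta rule: shuffle_coeff.induct) (auto split: if_splits)

lemma shuffle_coeff_Nil_right: "shuffle_coeff nu [] eta = (if nu = eta then 1 else 0)"
  by (cases nu) auto

lemma sum_words_length_Suc:
  "(\<Sum>xs\<in>{xs :: 'a::finite list. length xs = Suc k}. f xs)
     = (\<Sum>a\<in>UNIV. \<Sum>xs\<in>{xs. length xs = k}. f (a # xs))"
proof -
  have "{xs :: 'a list. length xs = Suc k} = (\<lambda>(a, xs). a # xs) ` (UNIV \<times> {xs. length xs = k})"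
    by (auto simp: length_Suc_conv image_iff)
  moreover have "inj_on (\<lambda>(a, xs). a # (xs :: 'a list)) (UNIV \<times> {xs. length xs = k})"
    by (auto simp: inj_on_def)
  ultimately show ?thesis
    by (simp add: sum.reindex sum.cartesian_product split_def)
qed

text \<open>Pascal's recurrence: the first letter of \<open>e # eta\<close> is taken either from \<open>nu\<close> or from \<open>xi\<close>.\<close>

lemma sum_shuffle_coeff_Cons:
  "(\<Sum>nu\<in>{nu :: 'a::finite list. length nu = Suc k}. \<Sum>xi\<in>{xi. length xi = Suc m}.
      shuffle_coeff nu xi (e # eta))
   = (\<Sum>nu\<in>{nu. length nu = k}. \<Sum>xi\<in>{xi. length xi = Suc m}. shuffle_coeff nu xi eta)
   + (\<Sum>nu\<in>{nu. length nu = Suc k}. \<Sum>xi\<in>{xi. length xi = m}. shuffle_coeff nu xi eta)"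
    (is "_ = ?first + ?last")
proof -
  have sum_if_const: "(\<Sum>x\<in>A. if P then f x else 0) = (if P then sum f A else (0::nat))"
    for P and A :: "'b set" and f
    by simp
  have "(\<Sum>a\<in>UNIV. \<Sum>nu\<in>{nu. length nu = k}. \<Sum>b\<in>UNIV. \<Sum>xi\<in>{xi. length xi = m}.
          if a = e then shuffle_coeff nu (b # xi) eta else 0) = ?first"
    by (simp add: sum_words_length_Suc sum_if_const)
  moreover have "(\<Sum>a\<in>UNIV. \<Sum>nu\<in>{nu. length nu = k}. \<Sum>b\<in>UNIV. \<Sum>xi\<in>{xi. length xi = m}.
          if b = e then shuffle_coeff (a # nu) xi eta else 0) = ?last"
    by (simp add: sum_words_length_Suc sum_if_const)
  ultimately show ?thesis
    by (simp add: sum_words_length_Suc sum.distrib)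
qed

lemma sum_shuffle_coeff_words_of_length:
  "(\<Sum>nu\<in>{nu :: 'a::finite list. length nu = k}. \<Sum>xi\<in>{xi. length xi = m}. shuffle_coeff nu xi eta)
   = (if k + m = length eta then (k + m) choose k else 0)"
proof (cases "k + m = length eta")
  case False
  then show ?thesis
    using shuffle_coeff_nonzero_length[of _ _ eta] by (auto intro!: sum.neutral)
next
  case True
  then show ?thesis
  proof (induction eta arbitrary: k m)
    case Nil
    then show ?case by simp
  next
    case (Cons e eta)
    show ?case
    proof (cases k)
      case 0
      with Cons.prems show ?thesis by (simp add: sum.delta' finite_words_of_length)
    next
      case (Suc k')
      show ?thesis
      proof (cases m)
        case 0
        with Cons.prems show ?thesis
          by (simp add: shuffle_coeff_Nil_right sum.delta' finite_words_of_length)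
      next
        case (Suc m')
        with \<open>k = Suc k'\<close> Cons show ?thesis
          by (simp add: sum_shuffle_coeff_Cons)
      qed
    qed
  qed
qed

lemma sum_shuffle_coeff_by_lengths:
  fixes w :: "nat \<Rightarrow> nat \<Rightarrow> 'b::comm_semiring_1" and eta :: "'a::finite list"
  shows "(\<Sum>(nu, xi) \<in> {(nu, xi). length nu + length xi = length eta}.
            w (length nu) (length xi) * of_nat (shuffle_coeff nu xi eta))
       = (\<Sum>k\<le>length eta. w k (length eta - k) * of_nat (length eta choose k))"
proof -
  define n where "n = length eta"
  define S where "S = {(nu :: 'a list, xi :: 'a list). length nu + length xi = n}"
  have "S \<subseteq> (\<Union>k\<le>n. {nu. length nu = k}) \<times> (\<Union>k\<le>n. {xi. length xi = k})"
    by (auto simp: S_def)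
  then have "finite S"
    by (rule finite_subset) (simp add: finite_words_of_length)
  moreover have "(\<lambda>x. length (fst x)) ` S \<subseteq> {..n}"
    by (auto simp: S_def)
  ultimately have "(\<Sum>(nu, xi) \<in> S. w (length nu) (length xi) * of_nat (shuffle_coeff nu xi eta))
     = (\<Sum>k\<le>n. \<Sum>(nu, xi) \<in> {x \<in> S. length (fst x) = k}.
          w (length nu) (length xi) * of_nat (shuffle_coeff nu xi eta))"
    by (intro sum.group[symmetric]) simp_all
  also have "\<dots> = (\<Sum>k\<le>n. w k (n - k) * of_nat (n choose k))"
  proof (rule sum.cong[OF refl])
    fix k assume "k \<in> {..n}"
    then have "{x \<in> S. length (fst x) = k} = {nu. length nu = k} \<times> {xi. length xi = n - k}"
      by (auto simp: S_def)
    then have "(\<Sum>(nu, xi) \<in> {x \<in> S. length (fst x) = k}.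
          w (length nu) (length xi) * of_nat (shuffle_coeff nu xi eta))
      = (\<Sum>nu\<in>{nu :: 'a list. length nu = k}. \<Sum>xi\<in>{xi. length xi = n - k}.
          w k (n - k) * of_nat (shuffle_coeff nu xi eta))"
      unfolding sum.cartesian_product by (intro sum.cong) auto
    also have "\<dots> = w k (n - k) * of_nat (\<Sum>nu\<in>{nu :: 'a list. length nu = k}.
          \<Sum>xi\<in>{xi. length xi = n - k}. shuffle_coeff nu xi eta)"
      by (simp add: sum_distrib_left)
    also have "\<dots> = w k (n - k) * of_nat (n choose k)"
      using \<open>k \<in> {..n}\<close> by (simp add: sum_shuffle_coeff_words_of_length n_def)
    finally show "(\<Sum>(nu, xi) \<in> {x \<in> S. length (fst x) = k}.
          w (length nu) (length xi) * of_nat (shuffle_coeff nu xi eta))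
      = w k (n - k) * of_nat (n choose k)" .
  qed
  finally show ?thesis by (simp add: S_def n_def)
qed

lemma sum_fact_mult_binomial:
  "(\<Sum>k\<le>n. fact k * fact (n - k) * of_nat (n choose k)) = (of_nat n + 1) * (fact n :: 'a::semiring_char_0)"
proof -
  have "fact k * fact (n - k) * of_nat (n choose k) = (fact n :: 'a)" if "k \<le> n" for k
    using binomial_fact_lemma[OF that] by (metis of_nat_fact of_nat_mult)
  then have "(\<Sum>k\<le>n. fact k * fact (n - k) * of_nat (n choose k)) = (\<Sum>k\<le>n. fact n :: 'a)"
    by (intro sum.cong) simp_all
  then show ?thesis by (simp add: algebra_simps)
qed

lemma linear_div_exponential_le:
  fixes q :: real
  assumes "q > 1"
  shows "(real n + 1) / q ^ n \<le> exp (-1) * q / ln q"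
proof -
  define L where "L = ln q"
  define t where "t = (real n + 1) * L"
  have "L > 0" using assms by (simp add: L_def)
  have q: "q = exp L" using assms by (simp add: L_def)
  have "(real n + 1) / q ^ n = t * exp (- t) * q / L"
    using \<open>L > 0\<close> by (simp add: q t_def exp_of_nat_mult[symmetric] exp_add[symmetric] field_simps)
  also have "\<dots> \<le> exp (-1) * q / L"
  proof -
    have "t * exp (- t) \<le> exp (t - 1) * exp (- t)"
      using exp_ge_add_one_self[of "t - 1"] by (intro mult_right_mono) simp_all
    also have "\<dots> = exp (-1)" by (simp flip: exp_add)
    finally show ?thesis
      using \<open>L > 0\<close> assms by (intro divide_right_mono mult_right_mono) simp_all
  qed
  finally show ?thesis by (simp add: L_def)
qed

lemma K_eps_bdd_above:
  fixes eps :: real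
  assumes "eps > 0"
  shows "bdd_above (range (\<lambda>eta :: 'a list. (real (length eta) + 1) / (1 + eps) ^ length eta))"
  using linear_div_exponential_le[of "1 + eps"] assms by (intro bdd_aboveI) auto

lemma le_K_eps:
  fixes eps :: real
  assumes "eps > 0"
  shows "(real n + 1) / (1 + eps) ^ n \<le> K_eps TYPE('a) eps"
proof -
  have "(real (length (replicate n (undefined :: 'a))) + 1) / (1 + eps) ^ length (replicate n (undefined :: 'a))
      \<le> K_eps TYPE('a) eps"
    unfolding K_eps_def by (rule cSUP_upper[OF _ K_eps_bdd_above[OF assms]]) simp
  then show ?thesis by simp
qed

lemma K_eps_le:
  fixes eps :: real
  assumes "eps > 0"
  shows "K_eps TYPE('a) eps \<le> exp (-1) * (1 + eps) / ln (1 + eps)"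
  unfolding K_eps_def using assms by (intro cSUP_least) (auto intro: linear_div_exponential_le)

lemma norm_le_maxnorm: "norm (z i) \<le> maxnorm z"
  unfolding maxnorm_def by (rule Max_ge) auto

lemma maxnorm_le_iff: "maxnorm z \<le> C \<longleftrightarrow> (\<forall>i. norm (z i) \<le> C)"
  unfolding maxnorm_def by (subst Max_le_iff) auto

lemma maxnorm_nonneg: "maxnorm z \<ge> 0"
  using norm_le_maxnorm norm_ge_zero order_trans by blast

lemma norm_le_linf_norm:
  assumes "M > 0" and "linf_norm M c < \<infinity>"
  shows "norm (c eta i) \<le> enn2real (linf_norm M c) * (M ^ length eta * fact (length eta))"
proof -
  have pos: "M ^ length eta * fact (length eta) > 0" using assms(1) by simp
  have "ennreal (maxnorm (c eta) / (M ^ length eta * fact (length eta))) \<le> linf_norm M c"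
    unfolding linf_norm_def by (rule SUP_upper) simp
  then have "enn2real (ennreal (maxnorm (c eta) / (M ^ length eta * fact (length eta))))
      \<le> enn2real (linf_norm M c)"
    using assms(2) by (intro enn2real_mono) simp_all
  then have "maxnorm (c eta) / (M ^ length eta * fact (length eta)) \<le> enn2real (linf_norm M c)"
    using pos maxnorm_nonneg[of "c eta"] by simp
  then show ?thesis
    using norm_le_maxnorm[of "c eta" i] pos by (simp add: divide_le_eq)
qed

lemma linf_norm_le:
  assumes "M > 0" and "\<And>eta i. norm (c eta i) \<le> C * (M ^ length eta * fact (length eta))"
  shows "linf_norm M c \<le> ennreal C"
  unfolding linf_norm_def
proof (rule SUP_least, rule ennreal_leI)
  fix eta :: "'a list"
  have "maxnorm (c eta) \<le> C * (M ^ length eta * fact (length eta))"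
    using assms(2) by (simp add: maxnorm_le_iff)
  then show "maxnorm (c eta) / (M ^ length eta * fact (length eta)) \<le> C"
    using assms(1) by (simp add: divide_le_eq)
qed

lemma norm_shuffle_series_le:
  fixes c d :: "'a::finite list \<Rightarrow> 'l \<Rightarrow> 'k::real_normed_field"
  assumes c: "\<And>nu. norm (c nu i) \<le> A * (M ^ length nu * fact (length nu))"
    and d: "\<And>xi. norm (d xi i) \<le> B * (M ^ length xi * fact (length xi))"
  shows "norm (shuffle_series c d eta i)
           \<le> A * B * (real (length eta) + 1) * (M ^ length eta * fact (length eta))"
proof -
  define n where "n = length eta"
  define P where "P = {(nu :: 'a list, xi :: 'a list). length nu + length xi = n}"
  have "norm (shuffle_series c d eta i)
      \<le> (\<Sum>(nu, xi) \<in> P. norm (c nu i) * norm (d xi i) * of_nat (shuffle_coeff nu xi eta))"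
    unfolding shuffle_series_def P_def n_def case_prod_beta
    by (rule order_trans[OF norm_sum]) (simp add: norm_mult)
  also have "\<dots> \<le> (\<Sum>(nu, xi) \<in> P.
      A * B * M ^ n * (fact (length nu) * fact (length xi)) * of_nat (shuffle_coeff nu xi eta))"
  proof (rule sum_mono, clarify)
    fix nu xi assume "(nu, xi) \<in> P"
    then have "M ^ length nu * M ^ length xi = M ^ n"
      by (simp add: P_def flip: power_add)
    moreover have "norm (c nu i) * norm (d xi i)
        \<le> (A * (M ^ length nu * fact (length nu))) * (B * (M ^ length xi * fact (length xi)))"
      using mult_mono[OF c d order_trans[OF norm_ge_zero c] norm_ge_zero] .
    ultimately show "norm (c nu i) * norm (d xi i) * of_nat (shuffle_coeff nu xi eta)
        \<le> A * B * M ^ n * (fact (length nu) * fact (length xi)) * of_nat (shuffle_coeff nu xi eta)"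
      by (intro mult_right_mono) (simp_all add: algebra_simps)
  qed
  also have "\<dots> = A * B * M ^ n * (\<Sum>(nu, xi) \<in> P.
      fact (length nu) * fact (length xi) * of_nat (shuffle_coeff nu xi eta))"
    by (simp add: sum_distrib_left case_prod_beta mult.assoc)
  also have "\<dots> = A * B * M ^ n * (\<Sum>k\<le>n. fact k * fact (n - k) * of_nat (n choose k))"
    unfolding P_def n_def by (subst sum_shuffle_coeff_by_lengths) (rule refl)
  also have "\<dots> = A * B * (real n + 1) * (M ^ n * fact n)"
    by (simp add: sum_fact_mult_binomial)
  finally show ?thesis by (simp add: n_def)
qed

lemma linf_norm_shuffle_series_le:
  fixes c d :: "'a::finite list \<Rightarrow> 'l::finite \<Rightarrow> 'k::real_normed_field"
  assumes "M > 0" and "q > 0" and c: "linf_norm M c < \<infinity>" and d: "linf_norm M d < \<infinity>"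
    and K: "\<And>n. real n + 1 \<le> K * q ^ n"
  shows "linf_norm (M * q) (shuffle_series c d) \<le> ennreal K * linf_norm M c * linf_norm M d"
proof -
  define A where "A = enn2real (linf_norm M c)"
  define B where "B = enn2real (linf_norm M d)"
  have "A * B \<ge> 0" by (simp add: A_def B_def)
  have "K \<ge> 0" using K[of 0] by simp
  have "norm (shuffle_series c d eta i) \<le> A * B * K * ((M * q) ^ length eta * fact (length eta))"
    for eta i
  proof -
    have "norm (shuffle_series c d eta i)
        \<le> A * B * (real (length eta) + 1) * (M ^ length eta * fact (length eta))"
      using norm_le_linf_norm[OF \<open>M > 0\<close> c] norm_le_linf_norm[OF \<open>M > 0\<close> d]
      unfolding A_def B_def by (rule norm_shuffle_series_le)
    also have "\<dots> \<le> A * B * (K * q ^ length eta) * (M ^ length eta * fact (length eta))"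
      using K \<open>A * B \<ge> 0\<close> \<open>M > 0\<close> by (intro mult_right_mono mult_left_mono) simp_all
    also have "\<dots> = A * B * K * ((M * q) ^ length eta * fact (length eta))"
      by (simp add: power_mult_distrib)
    finally show ?thesis .
  qed
  then have "linf_norm (M * q) (shuffle_series c d) \<le> ennreal (A * B * K)"
    using \<open>M > 0\<close> \<open>q > 0\<close> by (intro linf_norm_le) simp_all
  also have "\<dots> = ennreal K * linf_norm M c * linf_norm M d"
    using c d \<open>K \<ge> 0\<close>
    by (simp add: A_def B_def ennreal_mult' ennreal_mult ennreal_enn2real mult_ac)
  finally show ?thesis .
qed

theorem lemma3p3:
  fixes M eps :: real
    and c d :: "'a::finite list \<Rightarrow> 'l::finite \<Rightarrow> 'k::real_normed_field"
  assumes "M > 0" and "linf_norm M c < \<infinity>" and "linf_norm M d < \<infinity>" and "eps > 0"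
  shows "linf_norm (M * (1 + eps)) (shuffle_series c d) < \<infinity>
       \<and> linf_norm (M * (1 + eps)) (shuffle_series c d)
           \<le> ennreal (K_eps TYPE('a) eps) * linf_norm M c * linf_norm M d
       \<and> K_eps TYPE('a) eps \<le> exp (-1) * (1 + eps) / ln (1 + eps)"
proof -
  have "real n + 1 \<le> K_eps TYPE('a) eps * (1 + eps) ^ n" for n
    using le_K_eps[where 'a = 'a, OF \<open>eps > 0\<close>, of n] \<open>eps > 0\<close> by (simp add: divide_le_eq)
  then have bound: "linf_norm (M * (1 + eps)) (shuffle_series c d)
      \<le> ennreal (K_eps TYPE('a) eps) * linf_norm M c * linf_norm M d"
    using assms by (intro linf_norm_shuffle_series_le) simp_all
  moreover have "ennreal (K_eps TYPE('a) eps) * linf_norm M c * linf_norm M d < \<infinity>"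
    using assms by (simp add: ennreal_mult_less_top)
  ultimately show ?thesis
    using K_eps_le[where 'a = 'a, OF \<open>eps > 0\<close>] by (auto intro: le_less_trans)
qed

end
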